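(* Let $G=(V,E)$ be a simple graph with adjacency matrix $A$, let $x$ be a solution of $\mathrm{LCP}(A+I,-\mathbf{e})$, and let $S$ be a maximal independent set of $G$ with $S\subseteq\sigma(x)$. Then $\mathbf{e}^\top x\leq |S|$.
   Context: $x$ solves $\mathrm{LCP}(A+I,-\mathbf{e})$ iff $x\geq 0$, $(A+I)x\geq\mathbf{e}$ and $x^\top((A+I)x-\mathbf{e})=0$, where $I$ is the identity and $\mathbf{e}$ the all-ones vector. $\sigma(x):=\{i\in V\mid x_i>0\}$ is the support of $x$. *)

theory Defs
  imports Complex_Main
begin

definition simple_graph :: "'a set \<Rightarrow> ('a \<Rightarrow> 'a \<Rightarrow> bool) \<Rightarrow> bool" where
  "simple_graph V E \<longleftrightarrow> finite V \<and> (\<forall>u v. E u v \<longrightarrow> u \<in> V \<and> v \<in> V)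
     \<and> (\<forall>u v. E u v \<longrightarrow> E v u) \<and> (\<forall>v. \<not> E v v)"

definition adj_matrix :: "('a \<Rightarrow> 'a \<Rightarrow> bool) \<Rightarrow> 'a \<Rightarrow> 'a \<Rightarrow> real" where
  "adj_matrix E i j = (if E i j then 1 else 0)"

definition id_matrix :: "'a \<Rightarrow> 'a \<Rightarrow> real" where
  "id_matrix i j = (if i = j then 1 else 0)"

definition mat_vec :: "'a set \<Rightarrow> ('a \<Rightarrow> 'a \<Rightarrow> real) \<Rightarrow> ('a \<Rightarrow> real) \<Rightarrow> 'a \<Rightarrow> real" where
  "mat_vec V M x i = (\<Sum>j\<in>V. M i j * x j)"

definition solves_LCP :: "'a set \<Rightarrow> ('a \<Rightarrow> 'a \<Rightarrow> real) \<Rightarrow> ('a \<Rightarrow> real) \<Rightarrow> ('a \<Rightarrow> real) \<Rightarrow> bool" where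
  "solves_LCP V M q x \<longleftrightarrow>
     (\<forall>i\<in>V. x i \<ge> 0) \<and> (\<forall>i\<in>V. mat_vec V M x i + q i \<ge> 0)
     \<and> (\<Sum>i\<in>V. x i * (mat_vec V M x i + q i)) = 0"

definition supp :: "'a set \<Rightarrow> ('a \<Rightarrow> real) \<Rightarrow> 'a set" where
  "supp V x = {i \<in> V. x i > 0}"

definition independent_set :: "'a set \<Rightarrow> ('a \<Rightarrow> 'a \<Rightarrow> bool) \<Rightarrow> 'a set \<Rightarrow> bool" where
  "independent_set V E S \<longleftrightarrow> S \<subseteq> V \<and> (\<forall>u\<in>S. \<forall>v\<in>S. \<not> E u v)"

definition maximal_independent_set :: "'a set \<Rightarrow> ('a \<Rightarrow> 'a \<Rightarrow> bool) \<Rightarrow> 'a set \<Rightarrow> bool" where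
  "maximal_independent_set V E S \<longleftrightarrow> independent_set V E S \<and>
     (\<forall>T. independent_set V E T \<and> S \<subseteq> T \<longrightarrow> T = S)"

end

theory Submission
  imports Defs
begin

text \<open>Complementarity forces the rows of \<open>(A + I) x\<close> indexed by \<open>S \<subseteq> \<sigma>(x)\<close> to equal 1,
  so \<open>|S|\<close> is the total weight \<open>\<Sum>\<^sub>j x\<^sub>j c\<^sub>j\<close>, where \<open>c\<^sub>j\<close> is the number of vertices of
  \<open>S\<close> in the closed neighbourhood of \<open>j\<close>. Maximality of \<open>S\<close> means \<open>S\<close> is dominating,
  i.e. \<open>c\<^sub>j \<ge> 1\<close> for every vertex, whence \<open>|S| \<ge> \<Sum>\<^sub>j x\<^sub>j\<close>.\<close>

lemma solves_LCP_complementary: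
  assumes "finite V" and "solves_LCP V M q x" and "i \<in> supp V x"
  shows "mat_vec V M x i + q i = 0"
proof -
  have "\<forall>j\<in>V. x j * (mat_vec V M x j + q j) = 0"
    using assms(2) sum_nonneg_eq_0_iff[OF assms(1), of "\<lambda>j. x j * (mat_vec V M x j + q j)"]
    unfolding solves_LCP_def by auto
  then show ?thesis using assms(3) unfolding supp_def by auto
qed

lemma maximal_independent_set_dominating:
  assumes "simple_graph V E" and "maximal_independent_set V E S"
    and "j \<in> V" and "j \<notin> S"
  shows "\<exists>u\<in>S. E u j"
proof -
  have indep: "independent_set V E S" and max: "\<And>T. independent_set V E T \<Longrightarrow> S \<subseteq> T \<Longrightarrow> T = S"
    using assms(2) unfolding maximal_independent_set_def by auto
  have "\<not> independent_set V E (insert j S)"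
    using max[of "insert j S"] assms(4) by auto
  then obtain u where "u \<in> S" "E u j \<or> E j u"
    using indep assms(1,3) unfolding independent_set_def simple_graph_def by blast
  then show ?thesis using assms(1) unfolding simple_graph_def by blast
qed

lemma sum_le_sum_mat_vec_if_covering:
  fixes M :: "'a \<Rightarrow> 'a \<Rightarrow> real"
  assumes "finite V" and "S \<subseteq> V" and "\<forall>j\<in>V. x j \<ge> 0"
    and cover: "\<And>j. j \<in> V \<Longrightarrow> (\<Sum>i\<in>S. M i j) \<ge> 1"
  shows "(\<Sum>j\<in>V. x j) \<le> (\<Sum>i\<in>S. mat_vec V M x i)"
proof -
  have "x j \<le> x j * (\<Sum>i\<in>S. M i j)" if "j \<in> V" for j
    using mult_left_mono[OF cover[OF that]] assms(3) that by simp
  then have "(\<Sum>j\<in>V. x j) \<le> (\<Sum>j\<in>V. x j * (\<Sum>i\<in>S. M i j))"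
    by (rule sum_mono)
  also have "\<dots> = (\<Sum>j\<in>V. \<Sum>i\<in>S. M i j * x j)"
    by (simp add: sum_distrib_left mult.commute)
  also have "\<dots> = (\<Sum>i\<in>S. mat_vec V M x i)"
    unfolding mat_vec_def by (rule sum.swap)
  finally show ?thesis .
qed

lemma closed_neighbourhood_count_ge_1:
  assumes "simple_graph V E" and "maximal_independent_set V E S" and "j \<in> V"
  shows "(\<Sum>i\<in>S. adj_matrix E i j + id_matrix i j) \<ge> 1"
proof -
  have "S \<subseteq> V" "finite V"
    using assms(1,2) unfolding simple_graph_def maximal_independent_set_def independent_set_def
    by auto
  then have "finite S" by (rule finite_subset)
  obtain u where u: "u \<in> S" "E u j \<or> u = j"
    using maximal_independent_set_dominating[OF assms] by (cases "j \<in> S") auto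
  have "1 \<le> adj_matrix E u j + id_matrix u j"
    using u(2) unfolding adj_matrix_def id_matrix_def by auto
  also have "\<dots> \<le> (\<Sum>i\<in>S. adj_matrix E i j + id_matrix i j)"
    by (rule member_le_sum[OF u(1) _ \<open>finite S\<close>]) (simp add: adj_matrix_def id_matrix_def)
  finally show ?thesis .
qed

theorem lemma3:
  fixes V :: "'a set" and E :: "'a \<Rightarrow> 'a \<Rightarrow> bool" and x :: "'a \<Rightarrow> real" and S :: "'a set"
  assumes "simple_graph V E"
    and "solves_LCP V (\<lambda>i j. adj_matrix E i j + id_matrix i j) (\<lambda>_. -1) x"
    and "maximal_independent_set V E S"
    and "S \<subseteq> supp V x"
  shows "(\<Sum>i\<in>V. x i) \<le> real (card S)"
proof -
  let ?M = "\<lambda>i j. adj_matrix E i j + id_matrix i j"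
  have fin: "finite V" using assms(1) unfolding simple_graph_def by blast
  have "S \<subseteq> V" using assms(4) unfolding supp_def by blast
  have "\<forall>j\<in>V. x j \<ge> 0" using assms(2) unfolding solves_LCP_def by blast
  then have "(\<Sum>i\<in>V. x i) \<le> (\<Sum>i\<in>S. mat_vec V ?M x i)"
    by (rule sum_le_sum_mat_vec_if_covering[OF fin \<open>S \<subseteq> V\<close> _
          closed_neighbourhood_count_ge_1[OF assms(1,3)]])
  also have "\<dots> = (\<Sum>i\<in>S. 1)"
  proof (rule sum.cong[OF refl])
    fix i assume "i \<in> S"
    then show "mat_vec V ?M x i = 1"
      using solves_LCP_complementary[OF fin assms(2)] assms(4) by fastforce
  qed
  finally show ?thesis by simp
qed

end
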